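(* Let $r\ge1$ and $n\ge1$ be integers and let $\mathcal P(n,r,-1)$ be the set of lattice paths with steps $(1,1)$ (up) and $(1,-r)$ (down) from $(0,0)$ to $((r+1)n-1,-1)$ (so with $rn-1$ up steps and $n$ down steps). Then (whenever the denominators are nonzero): (1) For each $k=1,2,\dots,rn-1$, the number of paths in $\mathcal P(n,r,-1)$ that start with an up step and have exactly $k$ up steps starting on or above the $x$-axis is $\frac{1}{rn-1}\binom{(r+1)n-2}{n}$. (2) For each $k=1,2,\dots,n$, the number of paths in $\mathcal P(n,r,-1)$ that start with a down step and have exactly $k$ down steps starting on or above the $x$-axis is $\frac1n\binom{(r+1)n-2}{n-1}$. (3) For each $k=1,2,\dots,(r+1)n-1$, the number of paths in $\mathcal P(n,r,-1)$ with exactly $k$ vertices on or above the $x$-axis is $\frac{1}{(r+1)n-1}\binom{(r+1)n-1}{n}$.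
   Context: A step starts on or above the $x$-axis if its initial vertex has $y$-coordinate $\ge0$; a vertex is on or above the $x$-axis if its $y$-coordinate is $\ge0$ (the final vertex, at height $-1$, is never counted). *)

theory Defs
  imports Complex_Main
begin

text \<open>A lattice path is encoded as a list of steps: True = up step (1,1),
  False = down step (1,-r).  Vertex i (0 \<le> i \<le> length p) is the point reached after
  the first i steps; step i (0 \<le> i < length p) starts at vertex i.\<close>

definition height :: "nat \<Rightarrow> bool list \<Rightarrow> nat \<Rightarrow> int" where
  "height r p i = (\<Sum>j<i. if p ! j then 1 else - int r)"

definition paths :: "nat \<Rightarrow> nat \<Rightarrow> bool list set" where
  "paths n r = {p. length (filter (\<lambda>s. s) p) = r * n - 1 \<and> length (filter Not p) = n}"

definition ups_above :: "nat \<Rightarrow> bool list \<Rightarrow> nat" where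
  "ups_above r p = card {i. i < length p \<and> p ! i \<and> height r p i \<ge> 0}"

definition downs_above :: "nat \<Rightarrow> bool list \<Rightarrow> nat" where
  "downs_above r p = card {i. i < length p \<and> \<not> p ! i \<and> height r p i \<ge> 0}"

definition verts_above :: "nat \<Rightarrow> bool list \<Rightarrow> nat" where
  "verts_above r p = card {i. i < length p \<and> height r p i \<ge> 0}"

end

theory Submission
  imports Defs
begin

text \<open>A cycle-lemma argument. A path of length \<open>L\<close> ending at height \<open>-1\<close> has \<open>L\<close> cyclic
  rotations. Order the starting points of the steps of the periodically extended path by
  height and then by position: the rotation starting at step \<open>j\<close> has exactly as many
  \<open>P\<close>-steps on or above the axis as there are \<open>P\<close>-steps not below \<open>j\<close> in this order. Hence,
  among the rotations starting with a \<open>P\<close>-step, each count \<open>k = 1, \<dots>, m\<close> (\<open>m\<close> the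
  number of \<open>P\<close>-steps) occurs exactly once, and double counting pairs (path, rotation) shows that \<open>L\<close> times the number of paths
  starting with a \<open>P\<close>-step and having count \<open>k\<close> is \<open>\<bar>P(n,r,-1)\<bar> = binomial L n\<close>.\<close>

definition cyclic_height :: "nat \<Rightarrow> bool list \<Rightarrow> nat \<Rightarrow> int" where
  "cyclic_height r p m = (\<Sum>s<m. if p ! (s mod length p) then 1 else - int r)"

text \<open>Lexicographic order on (height, position), encoded in one integer since positions
  range over \<open>[0, length p)\<close>; because a full period lowers the height by exactly one, the
  key depends only on the position modulo \<open>length p\<close>.\<close>
definition cyclic_key :: "nat \<Rightarrow> bool list \<Rightarrow> nat \<Rightarrow> int" where
  "cyclic_key r p m = int (length p) * cyclic_height r p m + int m"

definition count_above :: "(bool \<Rightarrow> bool) \<Rightarrow> nat \<Rightarrow> bool list \<Rightarrow> nat" where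
  "count_above P r p = card {i. i < length p \<and> P (p ! i) \<and> height r p i \<ge> 0}"

lemma cyclic_height_add:
  "cyclic_height r p (m + i) =
     cyclic_height r p m + (\<Sum>s<i. if p ! ((m + s) mod length p) then 1 else - int r)"
  unfolding cyclic_height_def by (induction i) simp_all

lemma cyclic_height_mult_add:
  "cyclic_height r p (q * length p + t) = int q * height r p (length p) + cyclic_height r p t"
proof (induction q)
  case (Suc q)
  have "cyclic_height r p (length p + m) = height r p (length p) + cyclic_height r p m" for m
    unfolding cyclic_height_add by (simp add: cyclic_height_def height_def)
  from this[of "q * length p + t"] show ?case
    using Suc by (simp add: algebra_simps)
qed simp

lemma cyclic_key_mod:
  assumes "height r p (length p) = -1"
  shows "cyclic_key r p m = cyclic_key r p (m mod length p)"
proof -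
  have "cyclic_key r p (q * length p + t) = cyclic_key r p t" for q t
    unfolding cyclic_key_def cyclic_height_mult_add assms by (simp add: algebra_simps)
  from this[of "m div length p" "m mod length p"] show ?thesis by simp
qed

lemma inj_on_cyclic_key: "inj_on (cyclic_key r p) {..<length p}"
proof
  have key_mod: "cyclic_key r p m mod int (length p) = int m mod int (length p)" for m
    unfolding cyclic_key_def by simp
  fix s t assume "s \<in> {..<length p}" "t \<in> {..<length p}" "cyclic_key r p s = cyclic_key r p t"
  then have "int s mod int (length p) = int t mod int (length p)"
    unfolding key_mod[symmetric] by (simp only:)
  with \<open>s \<in> _\<close> \<open>t \<in> _\<close> show "s = t"
    by simp
qed

lemma height_rotate:
  assumes "i \<le> length p"
  shows "height r (rotate j p) i = cyclic_height r p (j + i) - cyclic_height r p j"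
proof -
  have "height r (rotate j p) i = (\<Sum>s<i. if p ! ((j + s) mod length p) then 1 else - int r)"
    unfolding height_def using assms by (intro sum.cong) (auto simp: nth_rotate)
  then show ?thesis by (simp add: cyclic_height_add)
qed

lemma height_rotate_nonneg_iff:
  assumes "height r p (length p) = -1" and "i < length p"
  shows "0 \<le> height r (rotate j p) i \<longleftrightarrow> cyclic_key r p j \<le> cyclic_key r p ((j + i) mod length p)"
proof -
  let ?L = "int (length p)" and ?d = "cyclic_height r p (j + i) - cyclic_height r p j"
  have key_diff: "cyclic_key r p ((j + i) mod length p) - cyclic_key r p j = ?L * ?d + int i"
    using cyclic_key_mod[OF assms(1), of "j + i"] by (simp add: cyclic_key_def algebra_simps)
  have "0 \<le> height r (rotate j p) i \<longleftrightarrow> 0 \<le> ?d"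
    using assms(2) by (simp add: height_rotate)
  also have "\<dots> \<longleftrightarrow> 0 \<le> (?L * ?d + int i) div ?L"
    using assms(2) by (simp add: int_div_pos_eq)
  also have "\<dots> \<longleftrightarrow> 0 \<le> ?L * ?d + int i"
    using assms(2) by (intro pos_imp_zdiv_nonneg_iff) auto
  finally show ?thesis
    using key_diff by linarith
qed

lemma length_filter_rotate: "length (filter P (rotate j xs)) = length (filter P xs)"
proof (induction j)
  case (Suc j)
  have "length (filter P (rotate1 ys)) = length (filter P ys)" for ys :: "'a list"
    by (cases ys) auto
  with Suc show ?case
    by (simp add: rotate_Suc)
qed simp

lemma card_rotated_indices:
  fixes L :: nat
  shows "card {i. i < L \<and> Q ((j + i) mod L)} = card {t. t < L \<and> Q t}"
proof -
  have "card {i. i < L \<and> Q ((j + i) mod L)} = length (filter Q (rotate j [0..<L]))"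
    unfolding length_filter_conv_card by (intro arg_cong[where f = card]) (auto simp: nth_rotate)
  also have "\<dots> = length (filter Q [0..<L])"
    by (rule length_filter_rotate)
  also have "\<dots> = card {t. t < L \<and> Q t}"
    unfolding length_filter_conv_card by (intro arg_cong[where f = card]) auto
  finally show ?thesis .
qed

lemma count_above_rotate:
  assumes "height r p (length p) = -1"
  shows "count_above P r (rotate j p)
           = card {t. t < length p \<and> P (p ! t) \<and> cyclic_key r p j \<le> cyclic_key r p t}"
proof -
  have "P (rotate j p ! i) \<and> 0 \<le> height r (rotate j p) i \<longleftrightarrow>
          P (p ! ((j + i) mod length p)) \<and> cyclic_key r p j \<le> cyclic_key r p ((j + i) mod length p)"
    if "i < length p" for i
    using that by (simp only: nth_rotate height_rotate_nonneg_iff[OF assms])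
  then have "count_above P r (rotate j p)
      = card {i. i < length p \<and> P (p ! ((j + i) mod length p))
                 \<and> cyclic_key r p j \<le> cyclic_key r p ((j + i) mod length p)}"
    unfolding count_above_def length_rotate by (intro arg_cong[where f = card] Collect_cong) blast
  also have "\<dots> = card {t. t < length p \<and> P (p ! t) \<and> cyclic_key r p j \<le> cyclic_key r p t}"
    by (rule card_rotated_indices)
  finally show ?thesis .
qed

lemma bij_betw_rank:
  fixes g :: "'a \<Rightarrow> 'b::linorder"
  assumes "finite J" and "inj_on g J"
  shows "bij_betw (\<lambda>j. card {t \<in> J. g j \<le> g t}) J {1..card J}"
proof -
  let ?rank = "\<lambda>j. card {t \<in> J. g j \<le> g t}"
  have rank_less: "?rank y < ?rank x" if "x \<in> J" "g x < g y" for x y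
  proof (rule psubset_card_mono)
    have "{t \<in> J. g y \<le> g t} \<subseteq> {t \<in> J. g x \<le> g t}"
      using that by auto
    moreover have "x \<in> {t \<in> J. g x \<le> g t} - {t \<in> J. g y \<le> g t}"
      using that by auto
    ultimately show "{t \<in> J. g y \<le> g t} \<subset> {t \<in> J. g x \<le> g t}"
      by blast
  qed (use assms(1) in simp)
  have inj: "inj_on ?rank J"
  proof (rule inj_onI, rule ccontr)
    fix x y assume "x \<in> J" "y \<in> J" "?rank x = ?rank y" "x \<noteq> y"
    then have "g x \<noteq> g y"
      using inj_onD[OF assms(2)] by blast
    then consider "g x < g y" | "g y < g x"
      by (rule linorder_neqE)
    then show False
      using rank_less[of x y] rank_less[of y x] \<open>x \<in> J\<close> \<open>y \<in> J\<close> \<open>?rank x = ?rank y\<close>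
      by cases auto
  qed
  have "?rank ` J \<subseteq> {1..card J}"
  proof
    fix z assume "z \<in> ?rank ` J"
    then obtain j where "j \<in> J" "z = ?rank j" by blast
    moreover have "?rank j \<le> card J" using assms(1) by (intro card_mono) auto
    moreover have "?rank j \<noteq> 0" using assms(1) \<open>j \<in> J\<close> by auto
    ultimately show "z \<in> {1..card J}" by simp
  qed
  then have "?rank ` J = {1..card J}"
    using inj by (intro card_subset_eq) (simp_all add: card_image)
  with inj show ?thesis
    unfolding bij_betw_def ..
qed

lemma card_rotations_with_count_above:
  assumes "height r p (length p) = -1" and "k \<in> {1..length (filter P p)}"
  shows "card {j. j < length p \<and> P (p ! j) \<and> count_above P r (rotate j p) = k} = 1"
proof -
  let ?J = "{t. t < length p \<and> P (p ! t)}"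
  let ?rank = "\<lambda>j. card {t \<in> ?J. cyclic_key r p j \<le> cyclic_key r p t}"
  have bij: "bij_betw ?rank ?J {1..card ?J}"
    by (rule bij_betw_rank) (auto intro: inj_on_subset[OF inj_on_cyclic_key])
  have "k \<in> {1..card ?J}"
    using assms(2) by (simp add: length_filter_conv_card)
  then have "k \<in> ?rank ` ?J"
    using bij by (simp add: bij_betw_def)
  then obtain j0 where "j0 \<in> ?J" "?rank j0 = k"
    by blast
  then have "{j \<in> ?J. ?rank j = k} = {j0}"
    using bij_betw_imp_inj_on[OF bij] by (auto dest: inj_onD)
  moreover have "{j. j < length p \<and> P (p ! j) \<and> count_above P r (rotate j p) = k}
      = {j \<in> ?J. ?rank j = k}"
    using count_above_rotate[OF assms(1)] by (auto simp: conj_assoc)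
  ultimately show ?thesis
    by simp
qed

lemma hd_rotate: "j < length p \<Longrightarrow> hd (rotate j p) = p ! j"
  by (subst hd_rotate_conv_nth) auto

lemma card_rotation_pairs:
  assumes len: "\<And>p. p \<in> S \<Longrightarrow> length p = L"
    and rotate: "\<And>p j. p \<in> S \<Longrightarrow> rotate j p \<in> S"
  shows "card (SIGMA p:S. {j. j < L \<and> Q (rotate j p)}) = card {q \<in> S. Q q} * L"
proof -
  have rotate_back: "rotate (L - j) (rotate j p) = p" "rotate j (rotate (L - j) p) = p"
    if "p \<in> S" "j < L" for p j
    using that len by (auto simp: rotate_rotate)
  have "bij_betw (\<lambda>(p, j). (rotate j p, j))
          (SIGMA p:S. {j. j < L \<and> Q (rotate j p)}) ({q \<in> S. Q q} \<times> {..<L})"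
  proof (rule bij_betw_byWitness[where f' = "\<lambda>(q, j). (rotate (L - j) q, j)"])
    show "(\<lambda>(q, j). (rotate (L - j) q, j)) ` ({q \<in> S. Q q} \<times> {..<L})
            \<subseteq> (SIGMA p:S. {j. j < L \<and> Q (rotate j p)})"
      using rotate rotate_back(2) by auto
  qed (use rotate rotate_back in auto)
  then show ?thesis
    by (simp add: bij_betw_same_card card_cartesian_product)
qed

lemma card_count_above_hd_mult:
  fixes S :: "bool list set"
  assumes "finite S"
    and len: "\<And>p. p \<in> S \<Longrightarrow> length p = L"
    and height: "\<And>p. p \<in> S \<Longrightarrow> height r p L = -1"
    and rotate: "\<And>p j. p \<in> S \<Longrightarrow> rotate j p \<in> S"
    and filter: "\<And>p. p \<in> S \<Longrightarrow> length (filter P p) = m"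
    and "k \<in> {1..m}"
  shows "card {q \<in> S. P (hd q) \<and> count_above P r q = k} * L = card S"
proof -
  let ?B = "\<lambda>p. {j. j < L \<and> P (hd (rotate j p)) \<and> count_above P r (rotate j p) = k}"
  have "card {q \<in> S. P (hd q) \<and> count_above P r q = k} * L = card (Sigma S ?B)"
    using card_rotation_pairs[OF len rotate, where Q = "\<lambda>q. P (hd q) \<and> count_above P r q = k"]
    by simp
  also have "\<dots> = (\<Sum>p\<in>S. card (?B p))"
    using assms(1) by (intro card_SigmaI) auto
  also have "\<dots> = (\<Sum>p\<in>S. 1)"
  proof (rule sum.cong[OF refl])
    fix p assume p: "p \<in> S"
    then have "?B p = {j. j < length p \<and> P (p ! j) \<and> count_above P r (rotate j p) = k}"
      using len[OF p] hd_rotate[of _ p] by auto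
    then show "card (?B p) = 1"
      using card_rotations_with_count_above[of r p k P] height len filter assms(6) p by simp
  qed
  finally show ?thesis
    by simp
qed

lemma length_paths: "p \<in> paths n r \<Longrightarrow> length p = r * n - 1 + n"
  unfolding paths_def using sum_length_filter_compl[of "\<lambda>s. s" p] by simp

lemma height_length:
  "height r p (length p) = int (length (filter (\<lambda>s. s) p)) - int r * int (length (filter Not p))"
  unfolding height_def length_filter_conv_card
  by (simp add: sum.If_cases lessThan_def Int_def)

lemma height_paths:
  assumes "p \<in> paths n r" and "1 \<le> r * n"
  shows "height r p (length p) = -1"
  using assms by (simp add: paths_def height_length of_nat_diff)

lemma rotate_paths: "p \<in> paths n r \<Longrightarrow> rotate j p \<in> paths n r"
  unfolding paths_def by (simp add: length_filter_rotate)

lemma card_bool_lists_count: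
  "card {p. length (filter (\<lambda>s. s) p) = a \<and> length (filter Not p) = b} = (a + b) choose b"
proof -
  let ?X = "{p. length (filter (\<lambda>s. s) p) = a \<and> length (filter Not p) = b}"
  let ?Y = "{A. A \<subseteq> {..<a + b} \<and> card A = b}"
  let ?downs = "\<lambda>p. {i. i < length p \<and> \<not> p ! i}"
  let ?list = "\<lambda>A. map (\<lambda>i. i \<notin> A) [0..<a + b]"
  have length_X: "length p = a + b" if "p \<in> ?X" for p
    using that sum_length_filter_compl[of "\<lambda>s. s" p] by simp
  have card_downs: "card (?downs p) = length (filter Not p)" for p
    by (simp add: length_filter_conv_card)
  have "bij_betw ?downs ?X ?Y"
  proof (rule bij_betw_byWitness[where f' = ?list])
    show "\<forall>p \<in> ?X. ?list (?downs p) = p"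
    proof
      fix p assume "p \<in> ?X"
      then show "?list (?downs p) = p"
        using length_X[of p] by (intro nth_equalityI) auto
    qed
    show "\<forall>A \<in> ?Y. ?downs (?list A) = A"
      by auto
    show "?downs ` ?X \<subseteq> ?Y"
    proof
      fix A assume "A \<in> ?downs ` ?X"
      then obtain p where "p \<in> ?X" "A = ?downs p"
        by blast
      then show "A \<in> ?Y"
        using length_X[of p] card_downs[of p] by auto
    qed
    show "?list ` ?Y \<subseteq> ?X"
    proof
      fix q assume "q \<in> ?list ` ?Y"
      then obtain A where A: "A \<in> ?Y" and q: "q = ?list A"
        by blast
      then have "?downs q = A"
        by auto
      then have "length (filter Not q) = b"
        using A card_downs[of q] by simp
      moreover have "length q = a + b"
        using q by simp
      ultimately show "q \<in> ?X"
        using sum_length_filter_compl[of "\<lambda>s. s" q] by simp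
    qed
  qed
  then have "card ?X = card ?Y"
    by (rule bij_betw_same_card)
  also have "\<dots> = (a + b) choose b"
    using n_subsets[of "{..<a + b}" b] by simp
  finally show ?thesis .
qed

lemma card_paths: "card (paths n r) = (r * n - 1 + n) choose n"
  unfolding paths_def by (rule card_bool_lists_count)

lemma card_paths_count_above:
  assumes "1 \<le> r" and "1 \<le> n"
    and "\<And>p. p \<in> paths n r \<Longrightarrow> length (filter P p) = m" and "k \<in> {1..m}"
  shows "card {q \<in> paths n r. P (hd q) \<and> count_above P r q = k} * ((r + 1) * n - 1)
           = ((r + 1) * n - 1) choose n"
proof -
  have rn: "1 \<le> r * n"
    using assms(1,2) by simp
  have L: "(r + 1) * n - 1 = r * n - 1 + n"
    using rn by simp
  have "finite (paths n r)"
    by (rule card_ge_0_finite) (simp add: card_paths)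
  then show ?thesis
    unfolding L card_paths[symmetric]
  proof (rule card_count_above_hd_mult[where m = m])
    fix p assume p: "p \<in> paths n r"
    show "length p = r * n - 1 + n"
      using p by (rule length_paths)
    show "height r p (r * n - 1 + n) = -1"
      using height_paths[OF p rn] length_paths[OF p] by simp
  qed (use assms rotate_paths in auto)
qed

lemma real_eq_divide_if_mult_eq:
  fixes c d e :: nat
  assumes "c * d = e" and "0 < d"
  shows "real c = real e / real d"
  using assms by (simp add: eq_divide_eq flip: of_nat_mult)

lemma card_paths_up_first_ups_above:
  assumes "1 \<le> r" and "1 \<le> n" and "k \<in> {1..r * n - 1}"
  shows "real (card {p \<in> paths n r. p \<noteq> [] \<and> hd p \<and> ups_above r p = k})
           = real (((r + 1) * n - 2) choose n) / real (r * n - 1)"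
proof -
  let ?A = "{q \<in> paths n r. hd q \<and> count_above (\<lambda>s. s) r q = k}"
  obtain m where rn: "r * n = Suc m"
    using assms by (cases "r * n") auto
  define L where "L = (r + 1) * n - 1"
  have L: "0 < L" "L - n = r * n - 1" "L - 1 = (r + 1) * n - 2"
    using rn assms(2) by (simp_all add: L_def)
  have "[] \<notin> paths n r"
    using assms(2) by (simp add: paths_def)
  then have A: "{p \<in> paths n r. p \<noteq> [] \<and> hd p \<and> ups_above r p = k} = ?A"
    by (auto simp: ups_above_def count_above_def)
  have "L * (card ?A * (r * n - 1)) = L * ((L - 1) choose n)"
  proof -
    have "L * (card ?A * (r * n - 1)) = (L - n) * (card ?A * L)"
      by (simp add: L ac_simps)
    also have "\<dots> = (L - n) * (L choose n)"
      using card_paths_count_above[of r n "\<lambda>s. s" "r * n - 1" k] assms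
      by (simp add: paths_def L_def)
    also have "\<dots> = L * ((L - 1) choose n)"
      by (rule binomial_absorb_comp)
    finally show ?thesis .
  qed
  then have "card ?A * (r * n - 1) = ((r + 1) * n - 2) choose n"
    using L by simp
  then show ?thesis
    unfolding A by (rule real_eq_divide_if_mult_eq) (use assms(3) in auto)
qed

lemma card_paths_down_first_downs_above:
  assumes "1 \<le> r" and "1 \<le> n" and "k \<in> {1..n}"
  shows "real (card {p \<in> paths n r. p \<noteq> [] \<and> \<not> hd p \<and> downs_above r p = k})
           = real (((r + 1) * n - 2) choose (n - 1)) / real n"
proof -
  let ?A = "{q \<in> paths n r. \<not> hd q \<and> count_above Not r q = k}"
  obtain m where rn: "r * n = Suc m"
    using assms by (cases "r * n") auto
  define L where "L = (r + 1) * n - 1"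
  have L: "0 < L" "L - 1 = (r + 1) * n - 2"
    using rn assms(2) by (simp_all add: L_def)
  have "[] \<notin> paths n r"
    using assms(2) by (simp add: paths_def)
  then have A: "{p \<in> paths n r. p \<noteq> [] \<and> \<not> hd p \<and> downs_above r p = k} = ?A"
    by (auto simp: downs_above_def count_above_def)
  have "L * (card ?A * n) = L * ((L - 1) choose (n - 1))"
  proof -
    have "L * (card ?A * n) = n * (card ?A * L)"
      by (simp add: ac_simps)
    also have "\<dots> = n * (L choose n)"
      using card_paths_count_above[of r n Not n k] assms by (simp add: paths_def L_def)
    also have "\<dots> = L * ((L - 1) choose (n - 1))"
      using assms(2) by (simp add: times_binomial_minus1_eq)
    finally show ?thesis .
  qed
  then have "card ?A * n = ((r + 1) * n - 2) choose (n - 1)"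
    using L by simp
  then show ?thesis
    unfolding A by (rule real_eq_divide_if_mult_eq) (use assms(2) in simp)
qed

lemma card_paths_verts_above:
  assumes "1 \<le> r" and "1 \<le> n" and "k \<in> {1..(r + 1) * n - 1}"
  shows "real (card {p \<in> paths n r. verts_above r p = k})
           = real (((r + 1) * n - 1) choose n) / real ((r + 1) * n - 1)"
proof -
  let ?A = "{q \<in> paths n r. True \<and> count_above (\<lambda>_. True) r q = k}"
  have A: "{p \<in> paths n r. verts_above r p = k} = ?A"
    by (simp add: verts_above_def count_above_def)
  have "card ?A * ((r + 1) * n - 1) = ((r + 1) * n - 1) choose n"
    using assms length_paths
    by (intro card_paths_count_above[where m = "(r + 1) * n - 1"]) auto
  then show ?thesis
    unfolding A by (rule real_eq_divide_if_mult_eq) (use assms(3) in auto)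
qed

theorem theorem14:
  fixes n r :: nat
  assumes "r \<ge> 1" and "n \<ge> 1"
  shows "(\<forall>k\<in>{1..r*n-1}.
            real (card {p \<in> paths n r. p \<noteq> [] \<and> hd p \<and> ups_above r p = k})
              = real (((r+1)*n-2) choose n) / real (r*n-1))
       \<and> (\<forall>k\<in>{1..n}.
            real (card {p \<in> paths n r. p \<noteq> [] \<and> \<not> hd p \<and> downs_above r p = k})
              = real (((r+1)*n-2) choose (n-1)) / real n)
       \<and> (\<forall>k\<in>{1..(r+1)*n-1}.
            real (card {p \<in> paths n r. verts_above r p = k})
              = real (((r+1)*n-1) choose n) / real ((r+1)*n-1))"
  using card_paths_up_first_ups_above card_paths_down_first_downs_above card_paths_verts_above assms
  by blast

end
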